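(* For each $n$ let $0<p_n,q_n\le 1$ with $\frac{p_nq_n^2n}{\log n}\to\infty$ as $n\to\infty$, and let $\alpha^{(0)}$ be an initial configuration of $n$ cards. Let $\alpha^{(k)}$ be the configuration after $k$ moves of $\mathscr{B}(n,p_n,q_n)$, and let $N(\alpha^{(k)})$ denote its number of nonempty piles. Put $D=\lceil 14\log n/(p_nq_n)\rceil$ and $M=\lceil n^2/p_n\rceil$. Then \[ \frac{1}{q_nn}\max\{N(\alpha^{(D+1)}),\dotsc,N(\alpha^{(D+M)})\}\to 0\quad\text{in probability as } n\to\infty. \]
   Context: $\mathscr{B}(n,p,q)$ ($0<p,q\le 1$) is $p$-random $q$-proportion Bulgarian solitaire on $n$ identical cards distributed in piles. In one move, from each pile of size $h$ the top $\lceil qh\rceil$ cards are candidates; each candidate card is picked with probability $p$, independently of all other candidates; the picked cards are removed and together form one new pile. *)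

theory Defs
  imports "HOL-Probability.Probability"
begin

text \<open>A configuration is a list of pile sizes (order irrelevant; cards identical).
  For each pile of size h, the number of picked cards among the top ceil(q h)
  candidates is Binomial(ceil(q h), p), independently over piles.\<close>

fun bs_draws :: "real \<Rightarrow> real \<Rightarrow> nat list \<Rightarrow> nat list pmf" where
  "bs_draws p q [] = return_pmf []"
| "bs_draws p q (h # hs) =
     bind_pmf (binomial_pmf (nat \<lceil>q * real h\<rceil>) p)
       (\<lambda>x. map_pmf (\<lambda>xs. x # xs) (bs_draws p q hs))"

definition bs_step :: "real \<Rightarrow> real \<Rightarrow> nat list \<Rightarrow> nat list pmf" where
  "bs_step p q hs = map_pmf
     (\<lambda>xs. filter (\<lambda>h. 0 < h) (map2 (-) hs xs @ [sum_list xs])) (bs_draws p q hs)"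

fun bs_traj :: "real \<Rightarrow> real \<Rightarrow> nat list \<Rightarrow> nat \<Rightarrow> nat list list pmf" where
  "bs_traj p q a 0 = return_pmf [a]"
| "bs_traj p q a (Suc m) =
     bind_pmf (bs_traj p q a m)
       (\<lambda>ps. map_pmf (\<lambda>y. ps @ [y]) (bs_step p q (last ps)))"

definition num_piles :: "nat list \<Rightarrow> nat" where
  "num_piles hs = length (filter (\<lambda>h. 0 < h) hs)"

end

theory Submission
  imports Defs "HOL-Real_Asymp.Real_Asymp"
begin

text \<open>
  Weight each card by \<open>c\<^sup>a\<close>, where \<open>a\<close> is the age of its pile capped at \<open>D\<close> and
  \<open>c = 1 + 3pq/5\<close>. Every card is picked with probability at least \<open>pq\<close>; picked cards restart
  at weight 1 and the others age by one move, so the expected total weight contracts by the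
  factor \<open>c(1 - pq) \<le> 1 - 2pq/5\<close> up to an additive \<open>n\<close>. As \<open>D \<ge> 14 ln n/(pq)\<close>, from time \<open>D\<close>
  on the expected total weight is at most \<open>c\<^sup>D n\<^sup>-\<^sup>2\<^sup>3\<^sup>/\<^sup>5 + 5n\<^sup>2/2\<close>, whereas every pile older
  than \<open>D\<close> weighs at least \<open>c\<^sup>D \<ge> n\<^sup>2\<^sup>1\<^sup>/\<^sup>4\<close>. So by Markov's inequality, at each time in
  \<open>[D+1, D+M]\<close> there are more than \<open>D\<close> piles with probability \<open>O(n\<^sup>-\<^sup>1\<^sup>3\<^sup>/\<^sup>4)\<close>; the union
  bound over the \<open>M = O(n\<^sup>3)\<close> times and \<open>D \<le> \<epsilon>qn\<close> for large \<open>n\<close> conclude.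
\<close>

subsection \<open>Age-weighted potential\<close>

text \<open>The \<open>i\<close>-th pile is weighted by \<open>w\<close> of the number of piles after it; as \<open>bs_step\<close>
  appends the new pile at the end, this is at most the age of the pile.\<close>

fun age_potential :: "(nat \<Rightarrow> real) \<Rightarrow> nat list \<Rightarrow> real" where
  "age_potential w [] = 0"
| "age_potential w (h # hs) = real h * w (length hs) + age_potential w hs"

lemma age_potential_snoc:
  "age_potential w (hs @ [s]) = age_potential (\<lambda>j. w (Suc j)) hs + real s * w 0"
  by (induction hs) auto

lemma age_potential_nonneg: "(\<And>j. 0 \<le> w j) \<Longrightarrow> 0 \<le> age_potential w hs"
  by (induction hs) auto

lemma age_potential_filter_le:
  assumes "\<And>j. 0 \<le> w j" "mono w"
  shows "age_potential w (filter P hs) \<le> age_potential w hs"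
proof (induction hs)
  case (Cons h hs)
  have "real h * w (length (filter P hs)) \<le> real h * w (length hs)"
    using assms(2) by (simp add: monoD mult_left_mono)
  moreover have "0 \<le> real h * w (length hs)" using assms(1) by simp
  ultimately show ?case using Cons by auto
qed simp

lemma age_potential_mono_weight:
  "(\<And>j. w j \<le> v j) \<Longrightarrow> age_potential w hs \<le> age_potential v hs"
  by (induction hs) (auto simp: add_mono mult_left_mono)

lemma age_potential_scale_weight: "age_potential (\<lambda>j. c * w j) hs = c * age_potential w hs"
  by (induction hs) (auto simp: algebra_simps)

lemma age_potential_le_sum_list:
  assumes "\<And>j. w j \<le> B"
  shows "age_potential w hs \<le> B * real (sum_list hs)"
proof (induction hs)
  case (Cons h hs)
  have "real h * w (length hs) \<le> B * real h"
    using assms[of "length hs"] by (metis mult.commute mult_left_mono of_nat_0_le_iff)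
  then show ?case using Cons by (simp add: algebra_simps)
qed simp

text \<open>The last \<open>D\<close> piles contribute at most \<open>D\<close>; each earlier nonempty pile has weight \<open>c\<^sup>D\<close>.\<close>

lemma num_piles_le_age_potential:
  assumes c: "1 \<le> c"
  shows "real (num_piles hs) \<le> real D + age_potential (\<lambda>j. c ^ min j D) hs / c ^ D"
proof (induction hs)
  case Nil
  then show ?case by (simp add: num_piles_def)
next
  case (Cons h hs)
  have cD: "0 < c ^ D" using c by simp
  show ?case
  proof (cases "D \<le> length hs")
    case True
    then have "age_potential (\<lambda>j. c ^ min j D) (h # hs) / c ^ D
        = real h + age_potential (\<lambda>j. c ^ min j D) hs / c ^ D"
      using cD by (simp add: add_divide_distrib min_def del: power_eq_0_iff)
    moreover have "real (num_piles (h # hs)) \<le> real h + real (num_piles hs)"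
      by (simp add: num_piles_def)
    ultimately show ?thesis using Cons by linarith
  next
    case False
    then have "num_piles (h # hs) \<le> D"
      using length_filter_le[of "\<lambda>h. 0 < h" "h # hs"] by (simp add: num_piles_def)
    moreover have "0 \<le> age_potential (\<lambda>j. c ^ min j D) (h # hs) / c ^ D"
      using cD c by (intro divide_nonneg_pos age_potential_nonneg) auto
    ultimately show ?thesis by linarith
  qed
qed

lemma nn_integral_binomial_pmf:
  assumes p: "0 \<le> p" "p \<le> 1"
  shows "(\<integral>\<^sup>+x. ennreal (real x) \<partial>binomial_pmf n p) = ennreal (real n * p)"
proof (induction n)
  case 0
  then show ?case using p by (simp add: binomial_pmf_0)
next
  case (Suc n)
  have shift: "(\<integral>\<^sup>+k. ennreal (real (1 + k)) \<partial>binomial_pmf n p) = 1 + ennreal (real n * p)"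
    using Suc by (simp add: ennreal_plus nn_integral_add measure_pmf.emeasure_space_1)
  have "(\<integral>\<^sup>+x. ennreal (real x) \<partial>binomial_pmf (Suc n) p)
      = (1 + ennreal (real n * p)) * ennreal p + ennreal (real n * p) * ennreal (1 - p)"
    using p shift Suc by (simp add: binomial_pmf_Suc nn_integral_return)
  also have "\<dots> = ennreal ((1 + real n * p) * p + real n * p * (1 - p))"
    using p by (subst ennreal_plus) (auto simp: ennreal_mult)
  also have "(1 + real n * p) * p + real n * p * (1 - p) = real (Suc n) * p"
    by (simp add: algebra_simps)
  finally show ?case .
qed

lemma nn_integral_binomial_pmf_remaining:
  assumes p: "0 \<le> p" "p \<le> 1" and "k \<le> h" and W: "0 \<le> W"
  shows "(\<integral>\<^sup>+x. ennreal (real (h - x) * W) \<partial>binomial_pmf k p) = ennreal ((real h - real k * p) * W)"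
proof -
  have "(\<integral>\<^sup>+x. ennreal (real (h - x) * W) + ennreal (real x * W) \<partial>binomial_pmf k p)
      = (\<integral>\<^sup>+x. ennreal (real h * W) \<partial>binomial_pmf k p)"
  proof (intro nn_integral_cong_AE AE_pmfI)
    fix x assume "x \<in> set_pmf (binomial_pmf k p)"
    then have "x \<le> h" using p \<open>k \<le> h\<close> by (auto simp: set_pmf_binomial_eq split: if_splits)
    then have "real (h - x) * W + real x * W = real h * W"
      by (simp add: of_nat_diff algebra_simps)
    then show "ennreal (real (h - x) * W) + ennreal (real x * W) = ennreal (real h * W)"
      using W by (simp flip: ennreal_plus)
  qed
  then have "(\<integral>\<^sup>+x. ennreal (real (h - x) * W) \<partial>binomial_pmf k p) + (\<integral>\<^sup>+x. ennreal (real x * W) \<partial>binomial_pmf k p)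
      = ennreal (real h * W)"
    by (simp add: nn_integral_add measure_pmf.emeasure_space_1)
  moreover have "(\<integral>\<^sup>+x. ennreal (real x * W) \<partial>binomial_pmf k p) = ennreal (real k * p * W)"
    using p W nn_integral_cmult[of "\<lambda>x. ennreal (real x)" "binomial_pmf k p" "ennreal W"]
    by (simp add: nn_integral_binomial_pmf ennreal_mult mult.commute mult.left_commute)
  ultimately have "(\<integral>\<^sup>+x. ennreal (real (h - x) * W) \<partial>binomial_pmf k p)
      = ennreal (real h * W) - ennreal (real k * p * W)"
    by (metis ennreal_add_diff_cancel_right ennreal_neq_top)
  also have "\<dots> = ennreal ((real h - real k * p) * W)"
    using p W by (subst ennreal_minus) (auto simp: algebra_simps)
  finally show ?thesis .
qed

lemma nat_ceiling_mult_le: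
  assumes "0 \<le> q" "q \<le> 1"
  shows "nat \<lceil>q * real h\<rceil> \<le> h"
proof -
  have "q * real h \<le> real h" using assms by (simp add: mult_left_le_one_le)
  then show ?thesis by linarith
qed

lemma bs_draws_le:
  assumes "0 \<le> p" "p \<le> 1" "0 \<le> q" "q \<le> 1"
  shows "xs \<in> set_pmf (bs_draws p q hs) \<Longrightarrow> list_all2 (\<le>) xs hs"
proof (induction hs arbitrary: xs)
  case (Cons h hs)
  then obtain x xs' where "xs = x # xs'" "xs' \<in> set_pmf (bs_draws p q hs)"
    and x: "x \<in> set_pmf (binomial_pmf (nat \<lceil>q * real h\<rceil>) p)"
    by auto
  moreover have "x \<le> h"
    using x assms nat_ceiling_mult_le[of q h]
    by (auto simp: set_pmf_binomial_eq split: if_splits intro: le_trans)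
  ultimately show ?case using Cons.IH by simp
qed simp

text \<open>Each pile loses in expectation \<open>p\<lceil>qh\<rceil> \<ge> pqh\<close> of its \<open>h\<close> cards.\<close>

lemma nn_integral_bs_draws_age_potential:
  assumes p: "0 \<le> p" "p \<le> 1" and q: "0 \<le> q" "q \<le> 1" and w: "\<And>j. 0 \<le> w j"
  shows "(\<integral>\<^sup>+xs. ennreal (age_potential w (map2 (-) hs xs)) \<partial>bs_draws p q hs)
    \<le> ennreal ((1 - p * q) * age_potential w hs)"
proof (induction hs)
  case (Cons h hs)
  define k where "k = nat \<lceil>q * real h\<rceil>"
  define W where "W = w (length hs)"
  have W: "0 \<le> W" using w by (simp add: W_def)
  have pq: "p * q \<le> 1" using p q by (simp add: mult_le_one)
  have rest: "(\<integral>\<^sup>+xs. ennreal (age_potential w (map2 (-) (h # hs) (x # xs))) \<partial>bs_draws p q hs)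
      \<le> ennreal (real (h - x) * W) + ennreal ((1 - p * q) * age_potential w hs)" for x
  proof -
    have "(\<integral>\<^sup>+xs. ennreal (age_potential w (map2 (-) (h # hs) (x # xs))) \<partial>bs_draws p q hs)
        = (\<integral>\<^sup>+xs. ennreal (real (h - x) * W) + ennreal (age_potential w (map2 (-) hs xs)) \<partial>bs_draws p q hs)"
    proof (intro nn_integral_cong_AE AE_pmfI)
      fix xs assume "xs \<in> set_pmf (bs_draws p q hs)"
      then have "length xs = length hs" using bs_draws_le[OF p q] list_all2_lengthD by blast
      then show "ennreal (age_potential w (map2 (-) (h # hs) (x # xs)))
          = ennreal (real (h - x) * W) + ennreal (age_potential w (map2 (-) hs xs))"
        using W age_potential_nonneg[OF w] by (simp add: W_def flip: ennreal_plus)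
    qed
    also have "\<dots> = ennreal (real (h - x) * W) + (\<integral>\<^sup>+xs. ennreal (age_potential w (map2 (-) hs xs)) \<partial>bs_draws p q hs)"
      by (subst nn_integral_add) (auto simp: measure_pmf.emeasure_space_1)
    finally show ?thesis using Cons by (simp add: add_left_mono)
  qed
  have "(\<integral>\<^sup>+xs. ennreal (age_potential w (map2 (-) (h # hs) xs)) \<partial>bs_draws p q (h # hs))
      = (\<integral>\<^sup>+x. (\<integral>\<^sup>+xs. ennreal (age_potential w (map2 (-) (h # hs) (x # xs))) \<partial>bs_draws p q hs)
           \<partial>binomial_pmf k p)"
    by (simp add: k_def)
  also have "\<dots> \<le> (\<integral>\<^sup>+x. ennreal (real (h - x) * W) + ennreal ((1 - p * q) * age_potential w hs) \<partial>binomial_pmf k p)"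
    by (intro nn_integral_mono rest)
  also have "\<dots> = ennreal ((real h - real k * p) * W) + ennreal ((1 - p * q) * age_potential w hs)"
    using p W nat_ceiling_mult_le[OF q, of h]
    by (simp add: nn_integral_add measure_pmf.emeasure_space_1 nn_integral_binomial_pmf_remaining k_def)
  also have "\<dots> \<le> ennreal ((1 - p * q) * (real h * W)) + ennreal ((1 - p * q) * age_potential w hs)"
  proof -
    have "q * real h \<le> real k" unfolding k_def using q by linarith
    then have "p * (q * real h) \<le> p * real k" using p by (simp add: mult_left_mono)
    then have "(real h - real k * p) * W \<le> (1 - p * q) * (real h * W)"
      using W by (simp add: algebra_simps mult_left_mono)
    then show ?thesis by (intro add_right_mono ennreal_leI)
  qed
  also have "\<dots> = ennreal ((1 - p * q) * (real h * W) + (1 - p * q) * age_potential w hs)"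
    using pq W age_potential_nonneg[of w hs] w by (simp flip: ennreal_plus)
  also have "\<dots> = ennreal ((1 - p * q) * age_potential w (h # hs))"
    by (simp add: W_def algebra_simps)
  finally show ?case .
qed simp

lemma sum_list_map2_diff:
  "list_all2 (\<le>) xs hs \<Longrightarrow> sum_list (map2 (-) hs xs) + sum_list xs = sum_list (hs :: nat list)"
  by (induction rule: list_all2_induct) auto

lemma sum_list_filter_pos: "sum_list (filter (\<lambda>h. 0 < h) hs) = sum_list (hs :: nat list)"
  by (induction hs) auto

lemma bs_step_sum_list:
  assumes p: "0 \<le> p" "p \<le> 1" and q: "0 \<le> q" "q \<le> 1" and ys: "ys \<in> set_pmf (bs_step p q hs)"
  shows "sum_list ys = sum_list hs"
proof -
  obtain xs where xs: "xs \<in> set_pmf (bs_draws p q hs)"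
    and "ys = filter (\<lambda>h. 0 < h) (map2 (-) hs xs @ [sum_list xs])"
    using ys by (auto simp: bs_step_def)
  then have "sum_list ys = sum_list (map2 (-) hs xs) + sum_list xs"
    by (simp only: sum_list_filter_pos) simp
  then show ?thesis using sum_list_map2_diff[OF bs_draws_le[OF p q xs]] by simp
qed

text \<open>Surviving piles age by one move (weight at most times \<open>c\<close>); the new pile weighs
  \<open>w 0 = 1\<close> per card.\<close>

lemma nn_integral_bs_step_age_potential:
  assumes p: "0 \<le> p" "p \<le> 1" and q: "0 \<le> q" "q \<le> 1" and w: "\<And>j. 0 \<le> w j" "mono w"
    and wc: "\<And>j. w (Suc j) \<le> c * w j" and w0: "w 0 = 1" and c: "0 \<le> c"
  shows "(\<integral>\<^sup>+ys. ennreal (age_potential w ys) \<partial>bs_step p q hs)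
    \<le> ennreal (c * (1 - p * q) * age_potential w hs + real (sum_list hs))"
proof -
  have "(\<integral>\<^sup>+ys. ennreal (age_potential w ys) \<partial>bs_step p q hs)
      = (\<integral>\<^sup>+xs. ennreal (age_potential w (filter (\<lambda>h. 0 < h) (map2 (-) hs xs @ [sum_list xs])))
           \<partial>bs_draws p q hs)"
    by (simp add: bs_step_def)
  also have "\<dots> \<le> (\<integral>\<^sup>+xs. ennreal c * ennreal (age_potential w (map2 (-) hs xs))
                       + ennreal (real (sum_list hs)) \<partial>bs_draws p q hs)"
  proof (intro nn_integral_mono_AE AE_pmfI)
    fix xs assume xs: "xs \<in> set_pmf (bs_draws p q hs)"
    define A where "A = map2 (-) hs xs"
    have "sum_list xs \<le> sum_list hs"
      using sum_list_map2_diff[OF bs_draws_le[OF p q xs]] by linarith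
    have "age_potential w (filter (\<lambda>h. 0 < h) (A @ [sum_list xs])) \<le> age_potential w (A @ [sum_list xs])"
      using w by (rule age_potential_filter_le)
    also have "\<dots> = age_potential (\<lambda>j. w (Suc j)) A + real (sum_list xs)"
      by (simp add: age_potential_snoc w0)
    also have "\<dots> \<le> age_potential (\<lambda>j. c * w j) A + real (sum_list hs)"
      using \<open>sum_list xs \<le> sum_list hs\<close> by (intro add_mono age_potential_mono_weight wc) auto
    finally show "ennreal (age_potential w (filter (\<lambda>h. 0 < h) (map2 (-) hs xs @ [sum_list xs])))
        \<le> ennreal c * ennreal (age_potential w (map2 (-) hs xs)) + ennreal (real (sum_list hs))"
      using c age_potential_nonneg[of w A] w
      by (simp add: A_def age_potential_scale_weight ennreal_leI flip: ennreal_mult ennreal_plus)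
  qed
  also have "\<dots> = ennreal c * (\<integral>\<^sup>+xs. ennreal (age_potential w (map2 (-) hs xs)) \<partial>bs_draws p q hs)
                  + ennreal (real (sum_list hs))"
    by (subst nn_integral_add) (auto simp: nn_integral_cmult measure_pmf.emeasure_space_1)
  also have "\<dots> \<le> ennreal c * ennreal ((1 - p * q) * age_potential w hs) + ennreal (real (sum_list hs))"
    by (intro add_right_mono mult_left_mono nn_integral_bs_draws_age_potential[OF p q w(1)]) auto
  also have "\<dots> = ennreal (c * (1 - p * q) * age_potential w hs + real (sum_list hs))"
    using c p q age_potential_nonneg[of w hs] w
    by (simp add: mult_le_one mult.assoc flip: ennreal_mult ennreal_plus)
  finally show ?thesis .
qed

primrec bs_config :: "real \<Rightarrow> real \<Rightarrow> nat list \<Rightarrow> nat \<Rightarrow> nat list pmf" where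
  "bs_config p q a 0 = return_pmf a"
| "bs_config p q a (Suc k) = bind_pmf (bs_config p q a k) (bs_step p q)"

lemma bs_traj_length: "ps \<in> set_pmf (bs_traj p q a m) \<Longrightarrow> length ps = Suc m"
  by (induction m arbitrary: ps) auto

lemma map_pmf_nth_bs_traj:
  "k \<le> m \<Longrightarrow> map_pmf (\<lambda>ps. ps ! k) (bs_traj p q a m) = bs_config p q a k"
proof (induction m arbitrary: k)
  case (Suc m)
  have unfold: "map_pmf (\<lambda>ps. ps ! k) (bs_traj p q a (Suc m))
      = bind_pmf (bs_traj p q a m) (\<lambda>ps. map_pmf (\<lambda>y. (ps @ [y]) ! k) (bs_step p q (last ps)))"
    by (simp add: map_bind_pmf map_pmf_comp)
  show ?case
  proof (cases "k \<le> m")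
    case True
    have "bind_pmf (bs_traj p q a m) (\<lambda>ps. map_pmf (\<lambda>y. (ps @ [y]) ! k) (bs_step p q (last ps)))
        = bind_pmf (bs_traj p q a m) (\<lambda>ps. return_pmf (ps ! k))"
      using True by (intro bind_pmf_cong refl) (auto simp: nth_append map_pmf_const dest: bs_traj_length)
    then show ?thesis using unfold Suc.IH[OF True] by (simp add: map_pmf_def)
  next
    case False
    then have k: "k = Suc m" using Suc.prems by simp
    have "bind_pmf (bs_traj p q a m) (\<lambda>ps. map_pmf (\<lambda>y. (ps @ [y]) ! k) (bs_step p q (last ps)))
        = bind_pmf (bs_traj p q a m) (\<lambda>ps. bs_step p q (ps ! m))"
    proof (intro bind_pmf_cong refl)
      fix ps assume "ps \<in> set_pmf (bs_traj p q a m)"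
      then have "length ps = Suc m" by (rule bs_traj_length)
      then show "map_pmf (\<lambda>y. (ps @ [y]) ! k) (bs_step p q (last ps)) = bs_step p q (ps ! m)"
        using k by (cases ps rule: rev_cases) (auto simp: nth_append)
    qed
    then show ?thesis using unfold Suc.IH[of m, symmetric] k by (simp add: bind_map_pmf)
  qed
qed simp

lemma bs_config_sum_list:
  assumes "0 \<le> p" "p \<le> 1" "0 \<le> q" "q \<le> 1"
  shows "hs \<in> set_pmf (bs_config p q a k) \<Longrightarrow> sum_list hs = sum_list a"
  by (induction k arbitrary: hs) (auto dest: bs_step_sum_list[OF assms])

lemma nn_integral_bs_config_age_potential:
  assumes p: "0 \<le> p" "p \<le> 1" and q: "0 \<le> q" "q \<le> 1" and w: "\<And>j. 0 \<le> w j" "mono w"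
    and wc: "\<And>j. w (Suc j) \<le> c * w j" and w0: "w 0 = 1" and c: "0 \<le> c"
    and contraction: "c * (1 - p * q) < 1"
  shows "(\<integral>\<^sup>+hs. ennreal (age_potential w hs) \<partial>bs_config p q a k)
     \<le> ennreal ((c * (1 - p * q)) ^ k * age_potential w a + real (sum_list a) / (1 - c * (1 - p * q)))"
proof (induction k)
  case 0
  then show ?case using contraction by (simp add: ennreal_leI)
next
  case (Suc k)
  define \<gamma> where "\<gamma> = c * (1 - p * q)"
  define S where "S = real (sum_list a)"
  have \<gamma>: "0 \<le> \<gamma>" "\<gamma> < 1" using c p q contraction by (simp_all add: \<gamma>_def mult_le_one)
  have "(\<integral>\<^sup>+hs. ennreal (age_potential w hs) \<partial>bs_config p q a (Suc k))
      = (\<integral>\<^sup>+hs. (\<integral>\<^sup>+ys. ennreal (age_potential w ys) \<partial>bs_step p q hs) \<partial>bs_config p q a k)"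
    by simp
  also have "\<dots> \<le> (\<integral>\<^sup>+hs. ennreal \<gamma> * ennreal (age_potential w hs) + ennreal S \<partial>bs_config p q a k)"
  proof (intro nn_integral_mono_AE AE_pmfI)
    fix hs assume "hs \<in> set_pmf (bs_config p q a k)"
    then have "(\<integral>\<^sup>+ys. ennreal (age_potential w ys) \<partial>bs_step p q hs) \<le> ennreal (\<gamma> * age_potential w hs + S)"
      using nn_integral_bs_step_age_potential[OF p q w wc w0 c, of hs] bs_config_sum_list[OF p q]
      by (simp add: \<gamma>_def S_def)
    then show "(\<integral>\<^sup>+ys. ennreal (age_potential w ys) \<partial>bs_step p q hs)
        \<le> ennreal \<gamma> * ennreal (age_potential w hs) + ennreal S"
      using \<gamma> age_potential_nonneg[of w hs] w by (simp add: S_def ennreal_mult)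
  qed
  also have "\<dots> = ennreal \<gamma> * (\<integral>\<^sup>+hs. ennreal (age_potential w hs) \<partial>bs_config p q a k) + ennreal S"
    by (subst nn_integral_add) (auto simp: nn_integral_cmult measure_pmf.emeasure_space_1)
  also have "\<dots> \<le> ennreal \<gamma> * ennreal (\<gamma> ^ k * age_potential w a + S / (1 - \<gamma>)) + ennreal S"
    using Suc by (intro add_right_mono mult_left_mono) (auto simp: \<gamma>_def S_def)
  also have "\<dots> = ennreal (\<gamma> * (\<gamma> ^ k * age_potential w a + S / (1 - \<gamma>)) + S)"
    using \<gamma> age_potential_nonneg[of w a] w by (simp add: S_def ennreal_mult)
  also have "\<gamma> * (\<gamma> ^ k * age_potential w a + S / (1 - \<gamma>)) + S = \<gamma> ^ Suc k * age_potential w a + S / (1 - \<gamma>)"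
    using \<gamma> by (simp add: field_simps)
  finally show ?case by (simp add: \<gamma>_def S_def)
qed

lemma prob_bs_traj_num_piles_gt:
  assumes p: "0 \<le> p" "p \<le> 1" and q: "0 \<le> q" "q \<le> 1" and c: "1 \<le> c"
    and contraction: "c * (1 - p * q) < 1" and T: "real D \<le> T" and "k \<le> m"
  shows "measure_pmf.prob (bs_traj p q a m) {ps. T < real (num_piles (ps ! k))}
     \<le> ((c * (1 - p * q)) ^ k * age_potential (\<lambda>j. c ^ min j D) a
         + real (sum_list a) / (1 - c * (1 - p * q))) / c ^ D"
proof -
  define w where "w = (\<lambda>j. c ^ min j D)"
  define B where "B = (c * (1 - p * q)) ^ k * age_potential w a + real (sum_list a) / (1 - c * (1 - p * q))"
  have "w (Suc j) \<le> c * w j" for j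
    using c by (cases "j < D") (auto simp: w_def min_def)
  then have w: "\<And>j. 0 \<le> w j" "mono w" "\<And>j. w (Suc j) \<le> c * w j" "w 0 = 1"
    using c by (auto simp: w_def intro!: monoI power_increasing)
  have cD: "0 < c ^ D" using c by simp
  have B: "0 \<le> B"
    unfolding B_def using c p q contraction age_potential_nonneg[of w a] w(1)
    by (intro add_nonneg_nonneg mult_nonneg_nonneg zero_le_power) (auto simp: mult_le_one)
  have "{ps. T < real (num_piles (ps ! k))} \<subseteq> {ps. 1 \<le> age_potential w (ps ! k) / c ^ D}"
  proof safe
    fix ps assume "T < real (num_piles (ps ! k))"
    then have "D + 1 \<le> num_piles (ps ! k)" using T by linarith
    then show "1 \<le> age_potential w (ps ! k) / c ^ D"
      using num_piles_le_age_potential[OF c, of "ps ! k" D] unfolding w_def by linarith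
  qed
  then have "measure_pmf.prob (bs_traj p q a m) {ps. T < real (num_piles (ps ! k))}
      \<le> measure_pmf.prob (bs_config p q a k) {hs. 1 \<le> age_potential w hs / c ^ D}"
    using \<open>k \<le> m\<close> measure_pmf.finite_measure_mono[of _ _ "bs_traj p q a m"]
    by (auto simp: map_pmf_nth_bs_traj[symmetric] measure_map_pmf vimage_def)
  also have "\<dots> \<le> B / c ^ D"
  proof -
    have "emeasure (bs_config p q a k) {hs\<in>UNIV. 1 \<le> ennreal (1 / c ^ D) * ennreal (age_potential w hs)}
        \<le> ennreal (1 / c ^ D) * (\<integral>\<^sup>+hs. ennreal (age_potential w hs) * indicator UNIV hs \<partial>bs_config p q a k)"
      by (rule nn_integral_Markov_inequality) auto
    also have "\<dots> \<le> ennreal (1 / c ^ D) * ennreal B"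
      unfolding B_def using c nn_integral_bs_config_age_potential[OF p q w _ contraction]
      by (intro mult_left_mono) auto
    also have "\<dots> = ennreal (B / c ^ D)"
      using cD ennreal_mult'[of "1 / c ^ D" B] by simp
    finally show ?thesis
      using cD B w(1) age_potential_nonneg[of w]
      by (simp add: measure_pmf.emeasure_eq_measure ennreal_mult[symmetric])
  qed
  finally show ?thesis by (simp add: B_def w_def)
qed

subsection \<open>Estimates for the burn-in time \<open>D\<close>\<close>

lemma contraction_factor_bounds:
  fixes x :: real
  assumes "0 \<le> x" "x \<le> 1"
  shows "0 \<le> (1 + 3 * x / 5) * (1 - x)" "(1 + 3 * x / 5) * (1 - x) \<le> 1 - 2 * x / 5"
proof -
  have "(1 + 3 * x / 5) * (1 - x) = 1 - 2 * x / 5 - 3 * x\<^sup>2 / 5"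
    by (simp add: power2_eq_square field_simps)
  moreover have "0 \<le> x\<^sup>2" "x\<^sup>2 \<le> x" using assms by (simp_all add: power2_eq_square mult_left_le_one_le)
  ultimately show "0 \<le> (1 + 3 * x / 5) * (1 - x)" "(1 + 3 * x / 5) * (1 - x) \<le> 1 - 2 * x / 5"
    using assms by linarith+
qed

lemma contraction_pow_le_exp:
  assumes x: "0 < x" "x \<le> 1" and D: "14 * L / x \<le> real D"
  shows "((1 + 3 * x / 5) * (1 - x)) ^ D \<le> exp (-(28/5) * L)"
proof -
  have "((1 + 3 * x / 5) * (1 - x)) ^ D \<le> exp (- 2 * x / 5) ^ D"
    using contraction_factor_bounds[of x] x exp_ge_add_one_self[of "- 2 * x / 5"]
    by (intro power_mono) auto
  also have "\<dots> = exp (- 2 * x / 5 * real D)" by (simp add: exp_of_nat_mult[symmetric] mult.commute)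
  also have "\<dots> \<le> exp (-(28/5) * L)"
    using D x by (simp add: field_simps)
  finally show ?thesis .
qed

lemma exp_le_growth_pow:
  assumes x: "0 < x" "x \<le> 1" and D: "14 * L / x \<le> real D"
  shows "exp ((21/4) * L) \<le> (1 + 3 * x / 5) ^ D"
proof -
  define c where "c = 1 + 3 * x / 5"
  have c: "0 < c" using x by (simp add: c_def)
  have "3 * x / 8 \<le> 1 - 1 / c"
    using x by (simp add: c_def field_simps)
  also have "\<dots> \<le> ln c"
    using ln_le_minus_one[of "1 / c"] c by (simp add: ln_div)
  finally have "(21/4) * L \<le> ln c * real D"
    using D x mult_right_mono[of "3 * x / 8" "ln c" "real D"] by (simp add: field_simps)
  then have "exp ((21/4) * L) \<le> exp (ln c * real D)" by simp
  also have "\<dots> = c ^ D" using c by (metis exp_ln exp_of_nat_mult mult.commute)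
  finally show ?thesis by (simp add: c_def)
qed

lemma prob_num_piles_gt_after_burn_in:
  fixes p q L :: real
  assumes p: "0 < p" "p \<le> 1" and q: "0 < q" "q \<le> 1" and a: "sum_list a = n"
    and n: "1 \<le> p * q * real n" and D: "14 * L / (p * q) \<le> real D" and T: "real D \<le> T"
    and k: "D \<le> k" "k \<le> m"
  shows "measure_pmf.prob (bs_traj p q a m) {ps. T < real (num_piles (ps ! k))}
    \<le> real n * exp (-(28/5) * L) + real n * (5 * real n / 2) * exp (-(21/4) * L)"
proof -
  define x where "x = p * q"
  define c where "c = 1 + 3 * x / 5"
  define \<gamma> where "\<gamma> = c * (1 - x)"
  have x: "0 < x" "x \<le> 1" using p q by (auto simp: x_def mult_le_one)
  have c: "1 \<le> c" "0 < c ^ D" using x by (simp_all add: c_def)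
  have \<gamma>: "0 \<le> \<gamma>" "\<gamma> \<le> 1 - 2 * x / 5" "\<gamma> < 1"
    using contraction_factor_bounds[of x] x unfolding \<gamma>_def c_def by linarith+
  have "measure_pmf.prob (bs_traj p q a m) {ps. T < real (num_piles (ps ! k))}
      \<le> \<gamma> ^ k * (age_potential (\<lambda>j. c ^ min j D) a / c ^ D) + (real n / (1 - \<gamma>)) / c ^ D"
    using prob_bs_traj_num_piles_gt[OF _ _ _ _ c(1) _ T k(2), of p q a] p q \<gamma>(3) a
    unfolding \<gamma>_def x_def by (simp add: add_divide_distrib)
  also have "\<dots> \<le> \<gamma> ^ D * real n + real n * (5 * real n / 2) * (1 / c ^ D)"
  proof (intro add_mono)
    have "age_potential (\<lambda>j. c ^ min j D) a \<le> c ^ D * real n"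
      using c a age_potential_le_sum_list[of "\<lambda>j. c ^ min j D" "c ^ D" a] by (simp add: power_increasing)
    moreover have "\<gamma> ^ k \<le> \<gamma> ^ D" using \<gamma> x k by (intro power_decreasing) auto
    ultimately show "\<gamma> ^ k * (age_potential (\<lambda>j. c ^ min j D) a / c ^ D) \<le> \<gamma> ^ D * real n"
      using c \<gamma> age_potential_nonneg[of "\<lambda>j. c ^ min j D" a]
      by (intro mult_mono) (auto simp: divide_le_eq mult.commute)
    have "1 / (1 - \<gamma>) \<le> 1 / (2 * x / 5)" using \<gamma> x by (intro divide_left_mono) auto
    also have "\<dots> \<le> 5 * real n / 2" using n x by (simp add: x_def field_simps)
    finally have "real n * (1 / (1 - \<gamma>)) * (1 / c ^ D) \<le> real n * (5 * real n / 2) * (1 / c ^ D)"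
      using c by (intro mult_right_mono mult_left_mono) auto
    then show "real n / (1 - \<gamma>) / c ^ D \<le> real n * (5 * real n / 2) * (1 / c ^ D)"
      by simp
  qed
  also have "\<dots> \<le> real n * exp (-(28/5) * L) + real n * (5 * real n / 2) * exp (-(21/4) * L)"
  proof (intro add_mono mult_left_mono)
    show "\<gamma> ^ D * real n \<le> real n * exp (-(28/5) * L)"
      using mult_right_mono[OF contraction_pow_le_exp[OF x D[folded x_def]], of "real n"]
      by (simp add: \<gamma>_def c_def mult.commute)
    have "exp ((21/4) * L) \<le> c ^ D" using exp_le_growth_pow[OF x D[folded x_def]] by (simp add: c_def)
    then have "1 / c ^ D \<le> 1 / exp ((21/4) * L)" using c by (intro divide_left_mono) auto
    then show "1 / c ^ D \<le> exp (-(21/4) * L)" by (simp add: exp_minus inverse_eq_divide)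
  qed auto
  finally show ?thesis .
qed

lemma prob_Max_gt_le_sum:
  fixes f :: "'a \<Rightarrow> 'b \<Rightarrow> nat"
  assumes "finite K" "K \<noteq> {}"
  shows "measure_pmf.prob P {x. t < real (Max (f x ` K))}
    \<le> (\<Sum>k\<in>K. measure_pmf.prob P {x. t < real (f x k)})"
proof -
  have "{x. t < real (Max (f x ` K))} \<subseteq> (\<Union>k\<in>K. {x. t < real (f x k)})"
  proof
    fix x assume "x \<in> {x. t < real (Max (f x ` K))}"
    moreover have "Max (f x ` K) \<in> f x ` K" using assms by (intro Max_in) auto
    ultimately show "x \<in> (\<Union>k\<in>K. {x. t < real (f x k)})" by force
  qed
  then have "measure_pmf.prob P {x. t < real (Max (f x ` K))}
      \<le> measure_pmf.prob P (\<Union>k\<in>K. {x. t < real (f x k)})"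
    by (intro measure_pmf.finite_measure_mono) auto
  also have "\<dots> \<le> (\<Sum>k\<in>K. measure_pmf.prob P {x. t < real (f x k)})"
    using assms by (intro measure_pmf.finite_measure_subadditive_finite) auto
  finally show ?thesis .
qed

lemma prob_late_max_piles_gt:
  fixes p q \<epsilon> :: real
  assumes p: "0 < p" "p \<le> 1" and q: "0 < q" "q \<le> 1" and a: "sum_list a = n"
    and n: "1 \<le> p * q * real n" and \<epsilon>: "0 < \<epsilon>"
    and D: "real (nat \<lceil>14 * ln (real n) / (p * q)\<rceil>) \<le> \<epsilon> * (q * real n)"
  shows "(let D = nat \<lceil>14 * ln (real n) / (p * q)\<rceil>; M = nat \<lceil>(real n)\<^sup>2 / p\<rceil> in
     measure_pmf.prob (bs_traj p q a (D + M))
       {ps. \<bar>real (Max ((\<lambda>k. num_piles (ps ! k)) ` {D + 1 .. D + M})) / (q * real n)\<bar> > \<epsilon>})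
   \<le> (real n ^ 3 + 1) * real n * exp (-(28/5) * ln (real n))
      + (real n ^ 3 + 1) * real n * (5 * real n / 2) * exp (-(21/4) * ln (real n))"
proof -
  define D where "D = nat \<lceil>14 * ln (real n) / (p * q)\<rceil>"
  define M where "M = nat \<lceil>(real n)\<^sup>2 / p\<rceil>"
  define bound where "bound = real n * exp (-(28/5) * ln (real n))
      + real n * (5 * real n / 2) * exp (-(21/4) * ln (real n))"
  have burn_in: "14 * ln (real n) / (p * q) \<le> real D" unfolding D_def by linarith
  have "n \<noteq> 0" using n by (intro notI) simp
  then have qn: "0 < q * real n" using q by simp
  have "q * (p * real n) \<le> p * real n" using p q \<open>n \<noteq> 0\<close> by (intro mult_left_le_one_le) auto
  then have "1 \<le> p * real n" using n by (simp add: algebra_simps)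
  then have "1 / p \<le> real n" using p by (simp add: field_simps)
  then have "(real n)\<^sup>2 / p \<le> real n ^ 3"
    using mult_left_mono[of "1 / p" "real n" "(real n)\<^sup>2"] by (simp add: power2_eq_square power3_eq_cube)
  moreover have "0 < (real n)\<^sup>2 / p" using \<open>n \<noteq> 0\<close> p by simp
  ultimately have M: "1 \<le> M" "real M \<le> real n ^ 3 + 1" unfolding M_def by linarith+
  have "{ps. \<bar>real (Max ((\<lambda>k. num_piles (ps ! k)) ` {D + 1 .. D + M})) / (q * real n)\<bar> > \<epsilon>}
      = {ps. \<epsilon> * (q * real n) < real (Max ((\<lambda>k. num_piles (ps ! k)) ` {D + 1 .. D + M}))}"
    using qn by (auto simp: field_simps)
  then have "measure_pmf.prob (bs_traj p q a (D + M))
      {ps. \<bar>real (Max ((\<lambda>k. num_piles (ps ! k)) ` {D + 1 .. D + M})) / (q * real n)\<bar> > \<epsilon>}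
    \<le> (\<Sum>k\<in>{D + 1 .. D + M}. measure_pmf.prob (bs_traj p q a (D + M))
          {ps. \<epsilon> * (q * real n) < real (num_piles (ps ! k))})"
    using prob_Max_gt_le_sum[of "{D + 1 .. D + M}"] M by simp
  also have "\<dots> \<le> (\<Sum>k\<in>{D + 1 .. D + M}. bound)"
    using prob_num_piles_gt_after_burn_in[OF p q a n burn_in D[folded D_def]]
    by (intro sum_mono) (simp add: bound_def)
  also have "\<dots> \<le> (real n ^ 3 + 1) * bound"
    using M mult_right_mono[of "real M" "real n ^ 3 + 1" bound] by (simp add: bound_def)
  also have "\<dots> = (real n ^ 3 + 1) * real n * exp (-(28/5) * ln (real n))
      + (real n ^ 3 + 1) * real n * (5 * real n / 2) * exp (-(21/4) * ln (real n))"
    by (simp add: bound_def algebra_simps)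
  finally show ?thesis unfolding Let_def D_def[symmetric] M_def[symmetric] .
qed

lemma late_piles_bound_tendsto_zero:
  "(\<lambda>n::nat. (real n ^ 3 + 1) * real n * exp (-(28/5) * ln (real n))
      + (real n ^ 3 + 1) * real n * (5 * real n / 2) * exp (-(21/4) * ln (real n))) \<longlonglongrightarrow> 0"
  by real_asymp

lemma burn_in_parameters:
  fixes p q \<epsilon> :: real
  assumes p: "0 < p" "p \<le> 1" and q: "0 < q" "q \<le> 1" and n: "3 \<le> n" and \<epsilon>: "0 < \<epsilon>"
    and large: "max 1 (28 / \<epsilon>) \<le> p * q\<^sup>2 * real n / ln (real n)"
  shows "1 \<le> p * q * real n \<and> real (nat \<lceil>14 * ln (real n) / (p * q)\<rceil>) \<le> \<epsilon> * (q * real n)"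
proof -
  define L where "L = ln (real n)"
  have "exp 1 \<le> real n" using n exp_le by linarith
  then have L: "1 \<le> L" unfolding L_def using ln_mono[of "exp 1" "real n"] by simp
  have pq: "0 < p * q" "p * q \<le> 1" using p q by (auto simp: mult_le_one)
  have "max 1 (28 / \<epsilon>) * L \<le> p * q\<^sup>2 * real n / L * L"
    using large L by (intro mult_right_mono) (simp_all add: L_def)
  also have "\<dots> = p * q * (q * real n)" using L by (simp add: power2_eq_square)
  finally have "max 1 (28 / \<epsilon>) * L \<le> p * q * (q * real n)" .
  moreover have "1 * L \<le> max 1 (28 / \<epsilon>) * L" "28 / \<epsilon> * L \<le> max 1 (28 / \<epsilon>) * L"
    using L by (intro mult_right_mono; simp)+
  ultimately have "L \<le> p * q * (q * real n)" "28 / \<epsilon> * L \<le> p * q * (q * real n)"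
    by linarith+
  then have large': "L \<le> p * q * (q * real n)" "28 * L \<le> \<epsilon> * (p * q * (q * real n))"
    using \<epsilon> by (simp_all add: field_simps)
  have qn: "p * q * (q * real n) \<le> q * real n" "q * real n \<le> real n"
    using pq q by (simp_all add: mult_left_le_one_le)
  have "1 \<le> p * q * real n"
    using large'(1) L qn(2) pq mult_left_mono[of "q * real n" "real n" "p * q"] by linarith
  moreover have "14 * L / (p * q) \<le> \<epsilon> * (q * real n) / 2"
    using large'(2) pq by (simp add: field_simps)
  moreover have "1 \<le> \<epsilon> * (q * real n) / 2"
    using large'(2) L qn(1) \<epsilon> mult_left_mono[of "p * q * (q * real n)" "q * real n" \<epsilon>] by linarith
  moreover have "0 \<le> 14 * L / (p * q)" using L pq by simp
  ultimately show ?thesis unfolding L_def by linarith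
qed

lemma eventually_burn_in_parameters:
  fixes p q :: "nat \<Rightarrow> real" and \<epsilon> :: real
  assumes "\<And>n. 0 < p n \<and> p n \<le> 1" "\<And>n. 0 < q n \<and> q n \<le> 1"
    and "filterlim (\<lambda>n. p n * (q n)\<^sup>2 * real n / ln (real n)) at_top at_top" and "0 < \<epsilon>"
  shows "\<forall>\<^sub>F n in sequentially. 1 \<le> p n * q n * real n
    \<and> real (nat \<lceil>14 * ln (real n) / (p n * q n)\<rceil>) \<le> \<epsilon> * (q n * real n)"
proof -
  have "\<forall>\<^sub>F n in sequentially. max 1 (28 / \<epsilon>) \<le> p n * (q n)\<^sup>2 * real n / ln (real n) \<and> 3 \<le> n"
    using assms(3) unfolding filterlim_at_top by (intro eventually_conj eventually_ge_at_top) (rule spec)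
  then show ?thesis
    by (rule eventually_mono) (use assms burn_in_parameters in blast)
qed

theorem lemma5:
  fixes p q :: "nat \<Rightarrow> real" and \<alpha>0 :: "nat \<Rightarrow> nat list"
  assumes "\<And>n. 0 < p n \<and> p n \<le> 1"
    and "\<And>n. 0 < q n \<and> q n \<le> 1"
    and "\<And>n. sum_list (\<alpha>0 n) = n \<and> (\<forall>h\<in>set (\<alpha>0 n). 0 < h)"
    and "filterlim (\<lambda>n. p n * (q n)\<^sup>2 * real n / ln (real n)) at_top at_top"
  shows "\<forall>\<epsilon>>0. (\<lambda>n. let D = nat \<lceil>14 * ln (real n) / (p n * q n)\<rceil>;
                          M = nat \<lceil>(real n)\<^sup>2 / p n\<rceil> in
            measure_pmf.prob (bs_traj (p n) (q n) (\<alpha>0 n) (D + M))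
              {ps. \<bar>real (Max ((\<lambda>k. num_piles (ps ! k)) ` {D + 1 .. D + M})) / (q n * real n)\<bar> > \<epsilon>})
          \<longlonglongrightarrow> 0"
proof (intro allI impI)
  fix \<epsilon> :: real assume "0 < \<epsilon>"
  with assms(1,2,4) have "\<forall>\<^sub>F n in sequentially. 1 \<le> p n * q n * real n
      \<and> real (nat \<lceil>14 * ln (real n) / (p n * q n)\<rceil>) \<le> \<epsilon> * (q n * real n)"
    by (rule eventually_burn_in_parameters)
  then show "(\<lambda>n. let D = nat \<lceil>14 * ln (real n) / (p n * q n)\<rceil>; M = nat \<lceil>(real n)\<^sup>2 / p n\<rceil> in
      measure_pmf.prob (bs_traj (p n) (q n) (\<alpha>0 n) (D + M))
        {ps. \<bar>real (Max ((\<lambda>k. num_piles (ps ! k)) ` {D + 1 .. D + M})) / (q n * real n)\<bar> > \<epsilon>})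
    \<longlonglongrightarrow> 0"
    by (intro tendsto_sandwich[OF _ _ tendsto_const late_piles_bound_tendsto_zero]; elim eventually_mono)
      (simp add: Let_def, use prob_late_max_piles_gt assms(1-3) \<open>0 < \<epsilon>\<close> in blast)
qed

end
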